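(* Let $(\mathcal{G},\mathcal{C})$ be an acyclic network with unit-delay links and a set of connections (sink demands) as described in the context. Suppose an assignment of local encoding coefficients (LECs) from $\mathbb{F}_{p^m}$ is a feasible network code for $(\mathcal{G},\mathcal{C})$. Let $\alpha\in\mathbb{F}_{p^a}$ (for some positive integer $a$) have multiplicative order $n$, and view the LECs as elements of $\mathbb{F}_{p^b}$, $b=\mathrm{LCM}(a,m)$. Then these LECs together with $\alpha$ form a feasible transform network code for $(\mathcal{G},\mathcal{C})$ if and only if $f(\alpha^t)\neq 0$ for all $0\le t\le n-1$, where $f(D)=\prod_{j=1}^{r}\det\big(M_j'(D)\big)$.
   Context: Network model: $\mathcal{G}=(V,E)$ is a finite directed acyclic graph (parallel links allowed); each link carries one symbol of a finite field $K$ of characteristic $p$ per time unit with a delay of one time unit. There are $s$ sources; source $i$ generates $\mu_i$ input processes; there are $r$ sinks; sink $j$ has $\nu_j$ output processes. A linear network code assigns LECs in $K$: for a link $e$ with tail $v$, $Z^{(t+1)}(e)=\sum_{l}\alpha_{l,e}X^{(t)}(v,l)+\sum_{e':\mathrm{head}(e')=v}\beta_{e',e}Z^{(t)}(e')$ (first sum present only if $v$ is a source), and at a sink $v'$, $Y^{(t+1)}(v',l)=\sum_{e':\mathrm{head}(e')=v'}\epsilon_{e',l}Z^{(t)}(e')$. Writing processes as power series in $D$, the output vector of sink $j$ is $\sum_i \tilde M_{ij}(D)\underline{X_i}(D)$ with $\tilde M_{ij}(D)\in K[D]^{\nu_j\times\mu_i}$. Let $d'_{min}$ be the smallest power of $D$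 occurring in any $\tilde M_{ij}(D)$ and define $M_{ij}(D)=D^{-d'_{min}}\tilde M_{ij}(D)=\sum_{d=0}^{d_{max}}M_{ij}^{(d)}D^d$, and $M_j(D)=[M_{1j}(D)\ \cdots\ M_{sj}(D)]$ ($\nu_j\times\mu$, $\mu=\sum_i\mu_i$). The connections $\mathcal{C}$ specify for each sink $j$ a set of exactly $\nu_j$ input processes it demands; $M_j'(D)$ is the $\nu_j\times\nu_j$ submatrix of $M_j(D)$ formed by the columns of the demanded processes. A feasible network code is an LEC assignment such that (zero interference) every column of $M_j(D)$ corresponding to an input process not demanded by sink $j$ is zero, for every $j$, and (invertibility) $\det M_j'(D)\neq 0$ in $K(D)$ for every $j$. Transform approach: for $\alpha$ of multiplicative order $n$ in an extension of $K$ and $0\le t\le n-1$, let $\hat M_j^{(t)}=\sum_{d=0}^{d_{max}}\alpha^{(n-1-t)d}M_j^{(d)}$ (where $M_j(D)=\sum_d M_j^{(d)}D^d$); this is the instantaneous transfer matrix of generation $t$ obtained after adding a cyclic prefix of length $d_{max}$, applying a length-$n$ DFT at the sources and inverse DFT at the sinks. The LECs together with $\alpha$ form a feasible transform network code if for every $t\in\{0,\dots,n-1\}$ and every sink $j$: every column of $\hat M_j^{(t)}$ corresponding to an undemanded process is zero, and the $\nu_j\times\nu_j$ submatrix of $\hat M_j^{(t)}$ formed by the demanded columns is nonsingular. *)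

theory Defs
  imports "HOL-Computational_Algebra.Polynomial" "Jordan_Normal_Form.Determinant"
begin

text \<open>Network: finite DAG with vertex set V, link set Ed (links form a type 'e, so
 parallel links are allowed), tail/head maps, nsrc sources (source i sits at vertex
 src i and generates mu i input processes), nsnk sinks (sink j sits at vertex snk j and
 has nu j output processes).\<close>

record ('v,'e) network =
  V :: "'v set"
  Ed :: "'e set"
  ltail :: "'e \<Rightarrow> 'v"
  lhead :: "'e \<Rightarrow> 'v"
  nsrc :: nat
  mu :: "nat \<Rightarrow> nat"
  src :: "nat \<Rightarrow> 'v"
  nsnk :: nat
  nu :: "nat \<Rightarrow> nat"
  snk :: "nat \<Rightarrow> 'v"

text \<open>Local encoding coefficients: acoef i l e = alpha_{l,e} (input process l of source i
 onto link e, used only when tail e is the vertex of source i), bcoef e' e = beta_{e',e},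
 ecoef j e' l = epsilon_{e',l} at sink j.\<close>

record ('e,'a) lec =
  acoef :: "nat \<Rightarrow> nat \<Rightarrow> 'e \<Rightarrow> 'a"
  bcoef :: "'e \<Rightarrow> 'e \<Rightarrow> 'a"
  ecoef :: "nat \<Rightarrow> 'e \<Rightarrow> nat \<Rightarrow> 'a"

definition valid_network :: "('v,'e) network \<Rightarrow> bool" where
  "valid_network N \<longleftrightarrow> finite (V N) \<and> finite (Ed N)
     \<and> (\<forall>e\<in>Ed N. ltail N e \<in> V N \<and> lhead N e \<in> V N)
     \<and> acyclic {(ltail N e, lhead N e) | e. e \<in> Ed N}
     \<and> (\<forall>i<nsrc N. src N i \<in> V N) \<and> inj_on (src N) {..<nsrc N}
     \<and> (\<forall>j<nsnk N. snk N j \<in> V N)"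

text \<open>Input processes are numbered globally: process l of source i is column offs N i + l,
 so M_j(D) = [M_1j ... M_sj] has mu_tot N columns.\<close>

definition offs :: "('v,'e) network \<Rightarrow> nat \<Rightarrow> nat" where
  "offs N i = (\<Sum>i'<i. mu N i')"

definition mu_tot :: "('v,'e) network \<Rightarrow> nat" where
  "mu_tot N = offs N (nsrc N)"

text \<open>Connections: dem j is the set of (global indices of) input processes demanded by sink j.\<close>

definition valid_conn :: "('v,'e) network \<Rightarrow> (nat \<Rightarrow> nat set) \<Rightarrow> bool" where
  "valid_conn N dem \<longleftrightarrow> (\<forall>j<nsnk N. dem j \<subseteq> {..<mu_tot N} \<and> card (dem j) = nu N j)"

text \<open>Transfer polynomial (in D) from input process l of source i to the symbol carried by
 link e, obtained by unrolling the recursion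
 Z(e) = D * (sum_l alpha_{l,e} X(v,l) + sum_{e'} beta_{e',e} Z(e')) k times.  On a DAG,
 k = card Ed unrollings give the exact transfer function.\<close>

fun zt :: "('v,'e) network \<Rightarrow> ('e,'a::comm_ring_1) lec \<Rightarrow> nat \<Rightarrow> 'e \<Rightarrow> nat \<Rightarrow> nat \<Rightarrow> 'a poly" where
  "zt N C 0 e i l = 0"
| "zt N C (Suc k) e i l = monom 1 1 *
     ((if ltail N e = src N i then [:acoef C i l e:] else 0)
      + (\<Sum>e'\<in>{e'\<in>Ed N. lhead N e' = ltail N e}. [:bcoef C e' e:] * zt N C k e' i l))"

definition ztrans :: "('v,'e) network \<Rightarrow> ('e,'a::comm_ring_1) lec \<Rightarrow> 'e \<Rightarrow> nat \<Rightarrow> nat \<Rightarrow> 'a poly" where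
  "ztrans N C e i l = zt N C (card (Ed N)) e i l"

text \<open>Entry (l, l') of tilde-M_ij(D): output l of sink j from input l' of source i.\<close>

definition Mtil :: "('v,'e) network \<Rightarrow> ('e,'a::comm_ring_1) lec \<Rightarrow> nat \<Rightarrow> nat \<Rightarrow> nat \<Rightarrow> nat \<Rightarrow> 'a poly" where
  "Mtil N C i j l l' = (\<Sum>e'\<in>{e'\<in>Ed N. lhead N e' = snk N j}.
       [:ecoef C j e' l:] * monom 1 1 * ztrans N C e' i l')"

definition dmin :: "('v,'e) network \<Rightarrow> ('e,'a::comm_ring_1) lec \<Rightarrow> nat" where
  "dmin N C = Min {d. \<exists>i<nsrc N. \<exists>j<nsnk N. \<exists>l<nu N j. \<exists>l'<mu N i.
                       coeff (Mtil N C i j l l') d \<noteq> 0}"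

definition Mij :: "('v,'e) network \<Rightarrow> ('e,'a::comm_ring_1) lec \<Rightarrow> nat \<Rightarrow> nat \<Rightarrow> nat \<Rightarrow> nat \<Rightarrow> 'a poly" where
  "Mij N C i j l l' = poly_shift (dmin N C) (Mtil N C i j l l')"

definition Mj :: "('v,'e) network \<Rightarrow> ('e,'a::comm_ring_1) lec \<Rightarrow> nat \<Rightarrow> nat \<Rightarrow> nat \<Rightarrow> 'a poly" where
  "Mj N C j l c = (\<Sum>i<nsrc N. \<Sum>l'<mu N i. if c = offs N i + l' then Mij N C i j l l' else 0)"

text \<open>M_j'(D): the nu_j x nu_j submatrix of demanded columns (in increasing column order).\<close>

definition Mjsub :: "('v,'e) network \<Rightarrow> ('e,'a::comm_ring_1) lec \<Rightarrow> (nat \<Rightarrow> nat set) \<Rightarrow> nat \<Rightarrow> 'a poly mat" where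
  "Mjsub N C dem j = mat (nu N j) (nu N j) (\<lambda>(l,k). Mj N C j l (sorted_list_of_set (dem j) ! k))"

definition feasible_code :: "('v,'e) network \<Rightarrow> ('e,'a::comm_ring_1) lec \<Rightarrow> (nat \<Rightarrow> nat set) \<Rightarrow> bool" where
  "feasible_code N C dem \<longleftrightarrow> (\<forall>j<nsnk N.
      (\<forall>c<mu_tot N. c \<notin> dem j \<longrightarrow> (\<forall>l<nu N j. Mj N C j l c = 0))
      \<and> det (Mjsub N C dem j) \<noteq> 0)"

definition dmax :: "('v,'e) network \<Rightarrow> ('e,'a::comm_ring_1) lec \<Rightarrow> nat" where
  "dmax N C = Max (insert 0 {degree (Mij N C i j l l') | i j l l'.
                   i < nsrc N \<and> j < nsnk N \<and> l < nu N j \<and> l' < mu N i})"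

definition Mhat :: "('v,'e) network \<Rightarrow> ('e,'a::comm_ring_1) lec \<Rightarrow> 'a \<Rightarrow> nat \<Rightarrow> nat \<Rightarrow> nat \<Rightarrow> nat \<Rightarrow> nat \<Rightarrow> 'a" where
  "Mhat N C \<alpha> n t j l c = (\<Sum>d\<le>dmax N C. \<alpha> ^ ((n - 1 - t) * d) * coeff (Mj N C j l c) d)"

definition feasible_transform_code ::
  "('v,'e) network \<Rightarrow> ('e,'a::comm_ring_1) lec \<Rightarrow> (nat \<Rightarrow> nat set) \<Rightarrow> 'a \<Rightarrow> nat \<Rightarrow> bool" where
  "feasible_transform_code N C dem \<alpha> n \<longleftrightarrow> (\<forall>t<n. \<forall>j<nsnk N.
      (\<forall>c<mu_tot N. c \<notin> dem j \<longrightarrow> (\<forall>l<nu N j. Mhat N C \<alpha> n t j l c = 0))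
      \<and> det (mat (nu N j) (nu N j)
             (\<lambda>(l,k). Mhat N C \<alpha> n t j l (sorted_list_of_set (dem j) ! k))) \<noteq> 0)"

definition fpoly :: "('v,'e) network \<Rightarrow> ('e,'a::comm_ring_1) lec \<Rightarrow> (nat \<Rightarrow> nat set) \<Rightarrow> 'a poly" where
  "fpoly N C dem = (\<Prod>j<nsnk N. det (Mjsub N C dem j))"

definition mult_order :: "'a::field \<Rightarrow> nat \<Rightarrow> bool" where
  "mult_order x n \<longleftrightarrow> 0 < n \<and> x ^ n = 1 \<and> (\<forall>k. 0 < k \<and> k < n \<longrightarrow> x ^ k \<noteq> 1)"

text \<open>LECs all lie in the subfield F_{p^m} (elements x with x^(p^m) = x).\<close>

definition lecs_in_subfield :: "('v,'e) network \<Rightarrow> ('e,'a::comm_ring_1) lec \<Rightarrow> nat \<Rightarrow> bool" where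
  "lecs_in_subfield N C q \<longleftrightarrow>
     (\<forall>i<nsrc N. \<forall>l<mu N i. \<forall>e\<in>Ed N. acoef C i l e ^ q = acoef C i l e)
   \<and> (\<forall>e'\<in>Ed N. \<forall>e\<in>Ed N. bcoef C e' e ^ q = bcoef C e' e)
   \<and> (\<forall>j<nsnk N. \<forall>e'\<in>Ed N. \<forall>l<nu N j. ecoef C j e' l ^ q = ecoef C j e' l)"

end

theory Submission
  imports Defs
begin

text \<open>Each entry of \<open>hat-M_j^{(t)}\<close> is the polynomial entry of \<open>M_j(D)\<close> evaluated at
  \<open>\<alpha>^(n-1-t)\<close>, and evaluation is a ring homomorphism, so it commutes with determinants.
  Given zero interference of the code, a feasible transform code therefore amounts to
  \<open>det M_j'(\<alpha>^(n-1-t)) \<noteq> 0\<close> for all \<open>j\<close> and \<open>t < n\<close>; as \<open>t\<close> runs over \<open>{..<n}\<close> so does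
  \<open>n-1-t\<close>, and in a field a product is nonzero iff all its factors are.\<close>

lemma poly_eq_sum_coeff_le:
  fixes x :: "'a::{comm_semiring_0,semiring_1}"
  assumes "degree p \<le> d"
  shows "poly p x = (\<Sum>i\<le>d. coeff p i * x ^ i)"
proof -
  have "poly p x = (\<Sum>i\<le>degree p. coeff p i * x ^ i)"
    by (rule poly_altdef)
  also have "\<dots> = (\<Sum>i\<le>d. coeff p i * x ^ i)"
    by (rule sum.mono_neutral_left) (use assms in \<open>auto simp: coeff_eq_0\<close>)
  finally show ?thesis .
qed

lemma det_map_mat_poly:
  fixes A :: "'a::comm_ring_1 poly mat"
  shows "det (map_mat (\<lambda>p. poly p x) A) = poly (det A) x"
proof -
  interpret comm_ring_hom "\<lambda>p. poly p x" by unfold_locales auto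
  show ?thesis by (rule hom_det)
qed

lemma all_less_diff_reflect:
  fixes n :: nat
  shows "(\<forall>t<n. P (n - 1 - t)) \<longleftrightarrow> (\<forall>t<n. P t)"
proof
  assume reflected: "\<forall>t<n. P (n - 1 - t)"
  show "\<forall>t<n. P t"
  proof (intro allI impI)
    fix t assume "t < n"
    then have "n - 1 - (n - 1 - t) = t" "n - 1 - t < n" by auto
    then show "P t" using reflected by metis
  qed
qed auto

lemma finite_degrees_Mij:
  "finite {degree (Mij N C i j l l') | i j l l'.
             i < nsrc N \<and> j < nsnk N \<and> l < nu N j \<and> l' < mu N i}"
proof -
  have "{degree (Mij N C i j l l') | i j l l'.
           i < nsrc N \<and> j < nsnk N \<and> l < nu N j \<and> l' < mu N i}
     = (\<lambda>(i, j, l, l'). degree (Mij N C i j l l')) `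
        (SIGMA i:{..<nsrc N}. SIGMA j:{..<nsnk N}. {..<nu N j} \<times> {..<mu N i})"
    by (auto simp: image_iff) force
  then show ?thesis by simp
qed

lemma degree_Mij_le_dmax:
  assumes "i < nsrc N" "j < nsnk N" "l < nu N j" "l' < mu N i"
  shows "degree (Mij N C i j l l') \<le> dmax N C"
  unfolding dmax_def by (rule Max_ge) (use finite_degrees_Mij assms in auto)

lemma degree_Mj_le_dmax:
  assumes "j < nsnk N" "l < nu N j"
  shows "degree (Mj N C j l c) \<le> dmax N C"
  unfolding Mj_def
  by (intro degree_sum_le) (auto intro: degree_Mij_le_dmax assms)

lemma Mhat_eq_poly_Mj:
  assumes "j < nsnk N" "l < nu N j"
  shows "Mhat N C \<alpha> n t j l c = poly (Mj N C j l c) (\<alpha> ^ (n - 1 - t))"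
  unfolding Mhat_def poly_eq_sum_coeff_le[OF degree_Mj_le_dmax[OF assms]]
  by (simp add: mult.commute flip: power_mult)

lemma det_Mhat_eq_poly_det_Mjsub:
  assumes "j < nsnk N"
  shows "det (mat (nu N j) (nu N j)
             (\<lambda>(l, k). Mhat N C \<alpha> n t j l (sorted_list_of_set (dem j) ! k)))
       = poly (det (Mjsub N C dem j)) (\<alpha> ^ (n - 1 - t))"
proof -
  have "mat (nu N j) (nu N j)
          (\<lambda>(l, k). Mhat N C \<alpha> n t j l (sorted_list_of_set (dem j) ! k))
      = map_mat (\<lambda>p. poly p (\<alpha> ^ (n - 1 - t))) (Mjsub N C dem j)"
    unfolding Mjsub_def by (rule eq_matI) (auto simp: Mhat_eq_poly_Mj[OF assms])
  then show ?thesis by (simp only: det_map_mat_poly)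
qed

lemma feasible_transform_code_iff_det_Mjsub:
  assumes "feasible_code N C dem"
  shows "feasible_transform_code N C dem \<alpha> n \<longleftrightarrow>
         (\<forall>t<n. \<forall>j<nsnk N. poly (det (Mjsub N C dem j)) (\<alpha> ^ (n - 1 - t)) \<noteq> 0)"
proof -
  have "Mhat N C \<alpha> n t j l c = 0"
    if "j < nsnk N" "c < mu_tot N" "c \<notin> dem j" "l < nu N j" for t j l c
    using assms that by (simp add: Mhat_eq_poly_Mj feasible_code_def)
  then show ?thesis
    unfolding feasible_transform_code_def by (auto simp: det_Mhat_eq_poly_det_Mjsub)
qed

lemma poly_fpoly_nonzero_iff:
  fixes C :: "('e, 'a::field) lec"
  shows "poly (fpoly N C dem) x \<noteq> 0 \<longleftrightarrow> (\<forall>j<nsnk N. poly (det (Mjsub N C dem j)) x \<noteq> 0)"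
  by (auto simp: fpoly_def poly_prod prod_zero_iff)

theorem lemma2:
  fixes N :: "('v,'e) network" and C :: "('e,'a::{field,finite}) lec"
    and dem :: "nat \<Rightarrow> nat set" and p a m n :: nat and \<alpha> :: 'a
  assumes "prime p" and "0 < a" and "0 < m"
    and "card (UNIV :: 'a set) = p ^ lcm a m"
    and "valid_network N" and "valid_conn N dem"
    and "lecs_in_subfield N C (p ^ m)"
    and "feasible_code N C dem"
    and "\<alpha> ^ (p ^ a) = \<alpha>" and "mult_order \<alpha> n"
  shows "feasible_transform_code N C dem \<alpha> n \<longleftrightarrow> (\<forall>t<n. poly (fpoly N C dem) (\<alpha> ^ t) \<noteq> 0)"
proof -
  have "feasible_transform_code N C dem \<alpha> n \<longleftrightarrow>
        (\<forall>t<n. \<forall>j<nsnk N. poly (det (Mjsub N C dem j)) (\<alpha> ^ (n - 1 - t)) \<noteq> 0)"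
    using \<open>feasible_code N C dem\<close> by (rule feasible_transform_code_iff_det_Mjsub)
  also have "\<dots> \<longleftrightarrow> (\<forall>t<n. \<forall>j<nsnk N. poly (det (Mjsub N C dem j)) (\<alpha> ^ t) \<noteq> 0)"
    by (rule all_less_diff_reflect)
  also have "\<dots> \<longleftrightarrow> (\<forall>t<n. poly (fpoly N C dem) (\<alpha> ^ t) \<noteq> 0)"
    by (simp add: poly_fpoly_nonzero_iff)
  finally show ?thesis .
qed

end
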